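(* Let $n \geq 4$ and let $S$ be a $4$-cap free, $n$-cup free configuration. Suppose $S$ contains an $(n-1)$-cup $C$ from $x$ to $y$, an $(n-2)$-cup $C_x$ that ends with $x$, and an $(n-2)$-cup $C_y$ that starts with $y$. Then $S$ contains a pair of interweaved laced $(n-1)$-cups.
   Context: A configuration is a finite set $S$ of points with a linear order $<$ and, for every $3$-element subset, an arbitrary assignment declaring it either a cap or a cup. Points $x_1<\cdots<x_a$ form an $a$-cup (resp. $a$-cap) if every consecutive triple $\{x_{i-1},x_i,x_{i+1}\}$, $1<i<a$, is assigned cup (resp. cap); $1$- and $2$-element sets are both caps and cups. The size of a cup is its number of points; a cup $x_1\cdots x_a$ runs from (starts with) $x_1$ to (ends with) $x_a$. Two cups $C_1$, $C_2$ running from $p$ to $r$ and from $q$ to $s$ respectively are interweaved if $p<q\le r<s$. An $(n-1)$-cup $C$ from $p$ to $q$ is laced if there exist a cup $C_p$ ending with $p$ and a cup $C_q$ starting with $q$ such that $|C_p|+|C_q|=n-1$. *)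

theory Defs
  imports Main
begin

text \<open>A configuration: a finite set S of points of a linearly ordered type, together with
  a predicate cup3 deciding for each triple x < y < z whether it is a cup (cup3 x y z)
  or a cap (\<not> cup3 x y z). Only values on increasing triples matter.\<close>

definition is_cup :: "'a::linorder set \<Rightarrow> ('a \<Rightarrow> 'a \<Rightarrow> 'a \<Rightarrow> bool) \<Rightarrow> 'a list \<Rightarrow> bool" where
  "is_cup S cup3 xs \<longleftrightarrow> sorted_wrt (<) xs \<and> set xs \<subseteq> S \<and>
     (\<forall>i. i + 2 < length xs \<longrightarrow> cup3 (xs ! i) (xs ! (i+1)) (xs ! (i+2)))"

definition is_cap :: "'a::linorder set \<Rightarrow> ('a \<Rightarrow> 'a \<Rightarrow> 'a \<Rightarrow> bool) \<Rightarrow> 'a list \<Rightarrow> bool" where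
  "is_cap S cup3 xs \<longleftrightarrow> sorted_wrt (<) xs \<and> set xs \<subseteq> S \<and>
     (\<forall>i. i + 2 < length xs \<longrightarrow> \<not> cup3 (xs ! i) (xs ! (i+1)) (xs ! (i+2)))"

definition cap_free :: "nat \<Rightarrow> 'a::linorder set \<Rightarrow> ('a \<Rightarrow> 'a \<Rightarrow> 'a \<Rightarrow> bool) \<Rightarrow> bool" where
  "cap_free a S cup3 \<longleftrightarrow> \<not> (\<exists>xs. is_cap S cup3 xs \<and> length xs = a)"

definition cup_free :: "nat \<Rightarrow> 'a::linorder set \<Rightarrow> ('a \<Rightarrow> 'a \<Rightarrow> 'a \<Rightarrow> bool) \<Rightarrow> bool" where
  "cup_free a S cup3 \<longleftrightarrow> \<not> (\<exists>xs. is_cup S cup3 xs \<and> length xs = a)"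

definition interweaved :: "'a::linorder list \<Rightarrow> 'a list \<Rightarrow> bool" where
  "interweaved C1 C2 \<longleftrightarrow> C1 \<noteq> [] \<and> C2 \<noteq> [] \<and>
     hd C1 < hd C2 \<and> hd C2 \<le> last C1 \<and> last C1 < last C2"

definition laced :: "nat \<Rightarrow> 'a::linorder set \<Rightarrow> ('a \<Rightarrow> 'a \<Rightarrow> 'a \<Rightarrow> bool) \<Rightarrow> 'a list \<Rightarrow> bool" where
  "laced n S cup3 C \<longleftrightarrow> is_cup S cup3 C \<and> length C = n - 1 \<and> C \<noteq> [] \<and>
     (\<exists>Cp Cq. is_cup S cup3 Cp \<and> is_cup S cup3 Cq \<and> Cp \<noteq> [] \<and> Cq \<noteq> [] \<and>
        last Cp = hd C \<and> hd Cq = last C \<and> length Cp + length Cq = n - 1)"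

end

theory Submission
  imports Defs "HOL-Library.Dual_Ordered_Lattice"
begin

text \<open>Let x = hd C and y = last C. It suffices to find a laced (n-1)-cup that starts at x and
  ends beyond y: reversing the order and reading every triple backwards maps cups to cups and
  exchanges the roles of Cx and Cy, so the same argument in the mirrored configuration yields a
  laced (n-1)-cup that ends at y and starts before x, and the two cups are interweaved.

  For the first cup let u be the point of C before y and y1 the point of Cy after y. As C cannot
  be extended by y1, u y y1 is a cap, so by 4-cap freeness x u y is a cup. If u y1 y2 is a cap
  for the next point y2 of Cy, then c u y1 is a cup for the point c before u, and C with y
  replaced by y1 is the required cup. Otherwise x u followed by the tail of Cy after y is; here
  x u y1 is a cup, since otherwise x' x u would be one (x' the point of Cx before x) and Cx
  followed by u y an n-cup. In both cases Cx and the last point witness that the cup is laced.\<close>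

lemma is_cup_singleton [simp]: "is_cup S f [a] \<longleftrightarrow> a \<in> S"
  by (simp add: is_cup_def)

lemma is_cup_doubleton [simp]: "is_cup S f [a, b] \<longleftrightarrow> a \<in> S \<and> b \<in> S \<and> a < b"
  by (auto simp: is_cup_def)

lemma is_cup_Cons_Cons_Cons [simp]:
  "is_cup S f (a # b # c # xs) \<longleftrightarrow> a \<in> S \<and> a < b \<and> f a b c \<and> is_cup S f (b # c # xs)"
proof -
  have all_split: "(\<forall>i. P i) \<longleftrightarrow> P 0 \<and> (\<forall>i. P (Suc i))" for P :: "nat \<Rightarrow> bool"
  proof (intro iffI conjI allI)
    fix i assume "P 0 \<and> (\<forall>i. P (Suc i))"
    then show "P i" by (cases i) auto
  qed auto
  have "(\<forall>i. i + 2 < length (a # ys) \<longrightarrow>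
        f ((a # ys) ! i) ((a # ys) ! (i + 1)) ((a # ys) ! (i + 2)))
    \<longleftrightarrow> f a (ys ! 0) (ys ! 1) \<and>
        (\<forall>i. i + 2 < length ys \<longrightarrow> f (ys ! i) (ys ! (i + 1)) (ys ! (i + 2)))"
    if "2 \<le> length ys" for ys
    using that by (subst all_split) auto
  from this[of "b # c # xs"] show ?thesis
    unfolding is_cup_def by auto
qed

lemma is_cup_take: "is_cup S f xs \<Longrightarrow> is_cup S f (take k xs)"
  by (auto simp: is_cup_def sorted_wrt_take dest: in_set_takeD)

lemma is_cup_drop:
  assumes "is_cup S f xs"
  shows "is_cup S f (drop k xs)"
  unfolding is_cup_def
proof (intro conjI allI impI)
  show "sorted_wrt (<) (drop k xs)" "set (drop k xs) \<subseteq> S"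
    using assms by (auto simp: is_cup_def sorted_wrt_drop dest: in_set_dropD)
  fix i assume "i + 2 < length (drop k xs)"
  then show "f (drop k xs ! i) (drop k xs ! (i + 1)) (drop k xs ! (i + 2))"
    using assms unfolding is_cup_def by (auto simp: algebra_simps)
qed

lemma is_cup_appendD:
  assumes "is_cup S f (xs @ ys)"
  shows "is_cup S f xs" and "is_cup S f ys"
  using is_cup_take[OF assms, of "length xs"] is_cup_drop[OF assms, of "length xs"] by simp_all

lemma is_cup_append_less:
  "is_cup S f (xs @ ys) \<Longrightarrow> a \<in> set xs \<Longrightarrow> b \<in> set ys \<Longrightarrow> a < b"
  by (simp add: is_cup_def sorted_wrt_append)

lemma is_cup_glue:
  "is_cup S f (xs @ [a, b]) \<Longrightarrow> is_cup S f (a # b # ys) \<Longrightarrow> is_cup S f (xs @ a # b # ys)"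
proof (induction xs rule: induct_list012)
  case (3 x y zs)
  then show ?case
    by (cases zs) (simp_all add: 3)
qed simp_all

lemma is_cap_iff_is_cup_neg: "is_cap S f = is_cup S (\<lambda>a b c. \<not> f a b c)"
  by (simp add: fun_eq_iff is_cap_def is_cup_def)

lemma cap_free_iff_cup_free_neg: "cap_free m S f \<longleftrightarrow> cup_free m S (\<lambda>a b c. \<not> f a b c)"
  by (simp add: cap_free_def cup_free_def is_cap_iff_is_cup_neg)

instance dual :: (linorder) linorder
  by standard (auto simp: dual_less_eq_iff)

lemma is_cup_rev_map:
  assumes cup: "is_cup S f xs"
    and antimono: "\<And>a b. a < b \<Longrightarrow> g b < g a"
    and reflects: "\<And>a b c. f a b c \<Longrightarrow> f' (g c) (g b) (g a)"
  shows "is_cup (g ` S) f' (rev (map g xs))"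
  unfolding is_cup_def
proof (intro conjI allI impI)
  show "sorted_wrt (<) (rev (map g xs))"
    using cup sorted_wrt_mono_rel[of xs "(<)" "\<lambda>a b. g b < g a"] antimono
    by (simp add: is_cup_def sorted_wrt_rev sorted_wrt_map)
  show "set (rev (map g xs)) \<subseteq> g ` S"
    using cup by (auto simp: is_cup_def)
  fix i assume i: "i + 2 < length (rev (map g xs))"
  define j where "j = length xs - (i + 3)"
  have "f (xs ! j) (xs ! (j + 1)) (xs ! (j + 2))"
    using cup i by (simp add: is_cup_def j_def)
  moreover have "length xs - Suc i = j + 2" "length xs - Suc (i + 1) = j + 1"
    "length xs - Suc (i + 2) = j"
    using i by (simp_all add: j_def)
  ultimately show "f' (rev (map g xs) ! i) (rev (map g xs) ! (i + 1)) (rev (map g xs) ! (i + 2))"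
    using i reflects by (simp add: rev_nth)
qed

definition reflect :: "('a \<Rightarrow> 'a \<Rightarrow> 'a \<Rightarrow> bool) \<Rightarrow> 'a dual \<Rightarrow> 'a dual \<Rightarrow> 'a dual \<Rightarrow> bool" where
  "reflect f u v w \<longleftrightarrow> f (undual w) (undual v) (undual u)"

lemma is_cup_reflect_iff:
  "is_cup (dual ` S) (reflect f) (rev (map dual xs)) \<longleftrightarrow> is_cup S f xs"
proof
  assume "is_cup (dual ` S) (reflect f) (rev (map dual xs))"
  from is_cup_rev_map[OF this, of undual f] show "is_cup S f xs"
    by (simp add: reflect_def dual_less_iff image_image rev_map)
next
  assume "is_cup S f xs"
  from is_cup_rev_map[OF this, of dual "reflect f"]
  show "is_cup (dual ` S) (reflect f) (rev (map dual xs))"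
    by (simp add: reflect_def)
qed

lemma cup_free_reflect:
  assumes "cup_free m S f"
  shows "cup_free m (dual ` S) (reflect f)"
proof -
  have "\<not> is_cup (dual ` S) (reflect f) ys" if "length ys = m" for ys
  proof
    assume "is_cup (dual ` S) (reflect f) ys"
    then have "is_cup S f (rev (map undual ys))"
      using is_cup_reflect_iff[of S f "rev (map undual ys)"] by (simp add: rev_map)
    with that assms show False
      by (auto simp: cup_free_def)
  qed
  then show ?thesis
    by (auto simp: cup_free_def)
qed

lemma cap_free_reflect:
  assumes "cap_free m S f"
  shows "cap_free m (dual ` S) (reflect f)"
proof -
  have "cup_free m (dual ` S) (reflect (\<lambda>a b c. \<not> f a b c))"
    using assms by (simp add: cap_free_iff_cup_free_neg cup_free_reflect)
  moreover have "reflect (\<lambda>a b c. \<not> f a b c) = (\<lambda>u v w. \<not> reflect f u v w)"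
    by (simp add: reflect_def fun_eq_iff)
  ultimately show ?thesis
    by (simp add: cap_free_iff_cup_free_neg)
qed

lemma laced_unreflect:
  assumes "laced n (dual ` S) (reflect f) (rev (map dual C))"
  shows "laced n S f C"
proof -
  obtain Cp Cq where Cp: "is_cup (dual ` S) (reflect f) Cp" "Cp \<noteq> []" "last Cp = dual (last C)"
    and Cq: "is_cup (dual ` S) (reflect f) Cq" "Cq \<noteq> []" "hd Cq = dual (hd C)"
    and len: "length Cp + length Cq = n - 1"
    and C: "is_cup S f C" "length C = n - 1" "C \<noteq> []"
    using assms by (auto simp: laced_def is_cup_reflect_iff hd_rev last_rev hd_map last_map)
  have "is_cup S f (rev (map undual Cq))" "is_cup S f (rev (map undual Cp))"
    using Cp(1) Cq(1) is_cup_reflect_iff[of S f "rev (map undual _)"]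
    by (simp_all add: rev_map)
  with Cp Cq len C show ?thesis
    unfolding laced_def
    by (intro conjI exI[of _ "rev (map undual Cq)"] exI[of _ "rev (map undual Cp)"])
       (auto simp: hd_rev last_rev hd_map last_map)
qed

lemma cap_free_4_cup3:
  assumes "cap_free 4 S f" "p \<in> S" "q \<in> S" "r \<in> S" "s \<in> S" "p < q" "q < r" "r < s"
  shows "f p q r \<or> f q r s"
proof -
  have "\<not> is_cap S f [p, q, r, s]"
    using assms(1) by (auto simp: cap_free_def)
  then show ?thesis
    using assms by (auto simp: is_cap_iff_is_cup_neg)
qed

lemma is_cup_hd_less_last:
  assumes "is_cup S f xs" "2 \<le> length xs"
  shows "hd xs < last xs"
proof -
  have "xs ! 0 < xs ! (length xs - 1)"
    using assms by (simp add: is_cup_def sorted_wrt_iff_nth_less)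
  moreover have "xs \<noteq> []"
    using assms(2) by auto
  ultimately show ?thesis
    by (simp add: hd_conv_nth last_conv_nth)
qed

lemma laced_by_cup_ending_at_hd:
  assumes "is_cup S f C" "length C = n - 1" "n \<ge> 3"
    and "is_cup S f Cp" "length Cp = n - 2" "last Cp = hd C"
  shows "laced n S f C"
proof -
  have "C \<noteq> []"
    using assms(2,3) by auto
  then have "last C \<in> S"
    using assms(1) by (auto simp: is_cup_def)
  with assms show ?thesis
    unfolding laced_def
    by (intro conjI exI[of _ Cp] exI[of _ "[last C]"]) auto
qed

lemma is_cup_Cons_ConsD: "is_cup S f (a # b # xs) \<Longrightarrow> a \<in> S \<and> b \<in> S \<and> a < b"
  using is_cup_take[of S f "a # b # xs" 2] by simp

lemma cup_free_snoc_not_cup: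
  assumes "cup_free n S f" "is_cup S f (xs @ [a, b])" "length xs + 3 = n" "c \<in> S" "b < c"
  shows "\<not> f a b c"
proof
  assume "f a b c"
  moreover have "is_cup S f [a, b]"
    using assms(2) by (rule is_cup_appendD)
  ultimately have "is_cup S f (xs @ [a, b, c])"
    using is_cup_glue[of S f xs a b "[c]"] assms(2,4,5) by simp
  with assms(1,3) show False
    by (auto simp: cup_free_def)
qed

lemma is_cup_replace_last:
  assumes "cap_free 4 S f" "is_cup S f (xs @ [c, u, y])" "is_cup S f (y # y1 # z # zs)"
    and "\<not> f u y1 z"
  shows "is_cup S f (xs @ [c, u, y1])"
proof -
  have "is_cup S f (xs @ [c, u])"
    using is_cup_appendD(1)[of S f "xs @ [c, u]" "[y]"] assms(2) by simp
  moreover have "is_cup S f [c, u, y]"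
    using assms(2) by (rule is_cup_appendD)
  moreover have "y < y1" "y1 \<in> S" "z \<in> S" "y1 < z"
    using assms(3) is_cup_Cons_ConsD[of S f y1 z zs] by auto
  ultimately show ?thesis
    using cap_free_4_cup3[OF assms(1), of c u y1 z] is_cup_glue[of S f xs c u "[y1]"] assms(4)
    by auto
qed

lemma is_cup_bypass_last:
  assumes "cap_free 4 S f" "cup_free n S f" "is_cup S f (xs @ [x', x])" "length xs + 4 = n"
    and "is_cup S f [x, u, y]" "is_cup S f (y # y1 # ys)" "ys \<noteq> [] \<Longrightarrow> f u y1 (hd ys)"
  shows "is_cup S f (x # u # y1 # ys)"
proof -
  have xuy: "x \<in> S" "u \<in> S" "y \<in> S" "x < u" "u < y" "f x u y"
    using assms(5) by auto
  have "is_cup S f [x', x]"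
    using assms(3) by (rule is_cup_appendD)
  then have x': "x' \<in> S" "x' < x"
    by auto
  have y1: "y1 \<in> S" "y < y1"
    using is_cup_Cons_ConsD[OF assms(6)] by auto
  have "f x u y1"
  proof (rule ccontr)
    assume "\<not> f x u y1"
    then have "f x' x u"
      using cap_free_4_cup3[OF assms(1), of x' x u y1] xuy x' y1 by auto
    then have "is_cup S f ((xs @ [x']) @ [x, u])"
      using is_cup_glue[of S f xs x' x "[u]"] assms(3) xuy x' by simp
    from cup_free_snoc_not_cup[OF assms(2) this] have "\<not> f x u y"
      using assms(4) xuy by simp
    with xuy show False
      by simp
  qed
  moreover have "is_cup S f (u # y1 # ys)"
    using assms(6,7) xuy y1 by (cases ys) auto
  ultimately show ?thesis
    using xuy by simp
qed

lemma laced_cup_from_hd_beyond_last: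
  fixes S :: "'a::linorder set"
  assumes "n \<ge> 4" and cap_free: "cap_free 4 S f" and cup_free: "cup_free n S f"
    and C: "is_cup S f C" "length C = n - 1"
    and Cx: "is_cup S f Cx" "length Cx = n - 2" "last Cx = hd C"
    and Cy: "is_cup S f Cy" "length Cy = n - 2" "hd Cy = last C"
  shows "\<exists>C'. laced n S f C' \<and> hd C' = hd C \<and> last C < last C'"
proof -
  have "Suc (Suc (Suc 0)) \<le> length (rev C)" "Suc (Suc 0) \<le> length (rev Cx)"
    "Suc (Suc 0) \<le> length Cy"
    using C(2) Cx(2) Cy(2) \<open>n \<ge> 4\<close> by simp_all
  then obtain y u c R x x' X y' y1 Y where
    "rev C = y # u # c # R" "rev Cx = x # x' # X" "Cy = y' # y1 # Y"
    unfolding Suc_le_length_iff by blast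
  then have C_eq: "C = (rev R @ [c]) @ [u, y]" and Cx_eq: "Cx = rev X @ [x', x]"
    and Cy_eq: "Cy = y # y1 # Y" and x_hd: "x = hd C"
    using Cx(3) Cy(3) by (simp_all add: rev_swap)
  have "x \<in> set (rev R @ [c])"
    unfolding x_hd C_eq by (cases "rev R") auto
  then have "x < u"
    using is_cup_append_less[of S f "rev R @ [c]" "[u, y]" x u] C(1) by (simp add: C_eq)
  have "is_cup S f [x', x]"
    using Cx(1) unfolding Cx_eq by (rule is_cup_appendD)
  moreover have "is_cup S f [u, y]"
    using C(1) unfolding C_eq by (rule is_cup_appendD)
  moreover have y1: "y1 \<in> S" "y < y1"
    using is_cup_Cons_ConsD[of S f y y1 Y] Cy(1) by (simp_all add: Cy_eq)
  moreover have "\<not> f u y y1"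
    using cup_free_snoc_not_cup[OF cup_free, of "rev R @ [c]" u y y1] C y1 \<open>n \<ge> 4\<close>
    by (simp add: C_eq)
  ultimately have xuy: "is_cup S f [x, u, y]"
    using cap_free_4_cup3[OF cap_free, of x u y y1] \<open>x < u\<close> by auto
  have "laced n S f C'" if "is_cup S f C'" "length C' = n - 1" "hd C' = hd C" for C'
    using laced_by_cup_ending_at_hd[of S f C' n Cx] that Cx \<open>n \<ge> 4\<close> by simp
  moreover consider (cap) z Z where "Y = z # Z" "\<not> f u y1 z"
    | (cup) "Y \<noteq> [] \<Longrightarrow> f u y1 (hd Y)"
    by (cases Y) auto
  then obtain C' where "is_cup S f C'" "length C' = n - 1" "hd C' = hd C" "last C < last C'"
  proof cases
    case cap
    show ?thesis
    proof (rule that)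
      show "is_cup S f (rev R @ [c, u, y1])"
        using is_cup_replace_last[OF cap_free, of "rev R" c u y y1 z Z] C(1) Cy(1) cap
        by (simp add: C_eq Cy_eq)
    qed (use C(2) y1 in \<open>simp_all add: C_eq hd_append\<close>)
  next
    case cup
    show ?thesis
    proof (rule that)
      show "is_cup S f (x # u # y1 # Y)"
        using is_cup_bypass_last[OF cap_free cup_free, of "rev X" x' x u y y1 Y]
          Cx(1,2) Cy(1) xuy cup
        by (simp add: Cx_eq Cy_eq)
    qed (use Cy(2) \<open>n \<ge> 4\<close> is_cup_hd_less_last[OF Cy(1)] in
        \<open>simp_all add: Cy_eq C_eq x_hd\<close>)
  qed
  ultimately show ?thesis
    by blast
qed

theorem lemma5p3:
  fixes S :: "'a::linorder set" and cup3 :: "'a \<Rightarrow> 'a \<Rightarrow> 'a \<Rightarrow> bool" and n :: nat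
    and C Cx Cy :: "'a list"
  assumes "finite S" and "n \<ge> 4"
    and "cap_free 4 S cup3" and "cup_free n S cup3"
    and "is_cup S cup3 C" and "length C = n - 1"
    and "is_cup S cup3 Cx" and "length Cx = n - 2" and "last Cx = hd C"
    and "is_cup S cup3 Cy" and "length Cy = n - 2" and "hd Cy = last C"
  shows "\<exists>C1 C2. laced n S cup3 C1 \<and> laced n S cup3 C2 \<and> interweaved C1 C2"
proof -
  obtain C2 where C2: "laced n S cup3 C2" "hd C2 = hd C" "last C < last C2"
    using laced_cup_from_hd_beyond_last[OF assms(2-12)] by blast
  have nonempty: "C \<noteq> []" "Cx \<noteq> []" "Cy \<noteq> []"
    using assms(2,6,8,11) by auto
  have "is_cup (dual ` S) (reflect cup3) (rev (map dual C))"
    "is_cup (dual ` S) (reflect cup3) (rev (map dual Cy))"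
    "is_cup (dual ` S) (reflect cup3) (rev (map dual Cx))"
    using assms(5,7,10) by (simp_all add: is_cup_reflect_iff)
  from laced_cup_from_hd_beyond_last[OF \<open>n \<ge> 4\<close> cap_free_reflect[OF assms(3)]
      cup_free_reflect[OF assms(4)] this(1) _ this(2) _ _ this(3)]
  obtain D where D: "laced n (dual ` S) (reflect cup3) D"
    "hd D = dual (last C)" "dual (hd C) < last D"
    using assms(6,8,9,11,12) nonempty by (auto simp: hd_rev last_rev hd_map last_map)
  define C1 where "C1 = rev (map undual D)"
  have "laced n S cup3 C1"
    using D(1) laced_unreflect[of n S cup3 C1] by (simp add: C1_def rev_map)
  moreover have "D \<noteq> []"
    using D(1) by (simp add: laced_def)
  then have "hd C1 < hd C" "last C1 = last C"
    using D(2,3) by (simp_all add: C1_def hd_rev last_rev hd_map last_map dual_less_iff)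
  moreover have "hd C < last C"
    using is_cup_hd_less_last[OF assms(5)] assms(2,6) by simp
  ultimately show ?thesis
    using C2 unfolding interweaved_def laced_def by fastforce
qed

end
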